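(* Consider the system of ordinary differential equations \[ \begin{aligned} \frac{dr_a}{dt} &= m_a\left(\frac{(p_a/\theta_{aa})^{n_{aa}}}{1+(p_a/\theta_{aa})^{n_{aa}}}+\frac{1}{1+(p_b/\theta_b)^{n_b}}\right)-\gamma_a r_a+A_1,\\ \frac{dr_b}{dt} &= \frac{m_b}{1+(p_a/\theta_a)^{n_a}}-\gamma_b r_b+B_1,\\ \frac{dp_a}{dt} &= k_a r_a-\delta_a p_a,\qquad \frac{dp_b}{dt} = k_b r_b-\delta_b p_b, \end{aligned} \] where $m_a,m_b,\gamma_a,\gamma_b,k_a,k_b,\delta_a,\delta_b,\theta_a,\theta_b,\theta_{aa}>0$, $A_1,B_1\ge 0$, and $n_a,n_b,n_{aa}$ are positive integers. Let $S^*=(r_a^*,r_b^*,p_a^*,p_b^* )$ be a steady state of this system with $p_a^*>0$, $p_b^*>0$. Set, with $p_a=p_a^*$, $p_b=p_b^*$, \[ X=\frac{m_a n_{aa}\theta_{aa}^{n_{aa}}p_a^{n_{aa}-1}}{(\theta_{aa}^{n_{aa}}+p_a^{n_{aa}})^2},\quad Y=-\frac{m_a n_b\theta_b^{n_b}p_b^{n_b-1}}{(\theta_b^{n_b}+p_b^{n_b})^2},\quad Z=-\frac{m_b n_a p_a^{n_a-1}\theta_a^{n_a}}{(p_a^{n_a}+\theta_a^{n_a})^2}, \] and \[ \begin{aligned} \epsilon_1&=\gamma_a+\gamma_b+\delta_a+\delta_b,\\ \epsilon_2&=\gamma_a\gamma_b+(\gamma_a+\gamma_b)(\delta_a+\delta_b)+\delta_a\delta_b-k_aX,\\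 \epsilon_3&=\delta_a\delta_b(\gamma_a+\gamma_b)+(\delta_a+\delta_b)\gamma_a\gamma_b-k_a(\delta_b+\gamma_b)X,\\ \epsilon_4&=\gamma_a\gamma_b\delta_a\delta_b-k_ak_bYZ-k_a\gamma_b\delta_bX. \end{aligned} \] If $\epsilon_1>0$, $\epsilon_3>0$, $\epsilon_4>0$ and $\epsilon_1\epsilon_2\epsilon_3-\epsilon_1^2\epsilon_4-\epsilon_3^2>0$, then $S^*$ is locally asymptotically stable.
   Context: This models a two-gene network in which gene $a$ is co-regulated by activation from its own protein $p_a$ and repression by protein $p_b$ (combined via a non-competitive OR logic, i.e. the sum of the two regulatory terms), and gene $b$ is repressed by $p_a$; $r_a,r_b$ are mRNA concentrations and $p_a,p_b$ protein concentrations. A steady state is a point where all four right-hand sides vanish. *)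

theory Defs
  imports "HOL-Analysis.Analysis"
begin

type_synonym state4 = "real \<times> real \<times> real \<times> real"

definition gene_field ::
  "real \<Rightarrow> real \<Rightarrow> real \<Rightarrow> real \<Rightarrow> real \<Rightarrow> real \<Rightarrow> real \<Rightarrow> real \<Rightarrow>
   real \<Rightarrow> real \<Rightarrow> real \<Rightarrow> nat \<Rightarrow> nat \<Rightarrow> nat \<Rightarrow> real \<Rightarrow> real \<Rightarrow> state4 \<Rightarrow> state4" where
  "gene_field ma mb ga gb ka kb da db tha thb thaa na nb naa A1 B1 s =
     (case s of (ra, rb, pa, pb) \<Rightarrow>
       ( ma * ((pa / thaa) ^ naa / (1 + (pa / thaa) ^ naa) + 1 / (1 + (pb / thb) ^ nb))
           - ga * ra + A1,
         mb / (1 + (pa / tha) ^ na) - gb * rb + B1,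
         ka * ra - da * pa,
         kb * rb - db * pb))"

definition solution_on :: "('a::real_normed_vector \<Rightarrow> 'a) \<Rightarrow> (real \<Rightarrow> 'a) \<Rightarrow> real set \<Rightarrow> bool" where
  "solution_on f x I \<longleftrightarrow> (\<forall>t\<in>I. (x has_vector_derivative f (x t)) (at t within I))"

definition locally_asymptotically_stable :: "('a::real_normed_vector \<Rightarrow> 'a) \<Rightarrow> 'a \<Rightarrow> bool" where
  "locally_asymptotically_stable f S \<longleftrightarrow>
     f S = 0 \<and>
     (\<forall>\<epsilon>>0. \<exists>\<delta>>0. \<forall>x T. solution_on f x {0..<T} \<and> dist (x 0) S < \<delta> \<longrightarrow>
                       (\<forall>t\<in>{0..<T}. dist (x t) S < \<epsilon>)) \<and>
     (\<exists>\<delta>>0. \<forall>y. dist y S < \<delta> \<longrightarrow>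
        (\<exists>x. solution_on f x {0..} \<and> x 0 = y) \<and>
        (\<forall>x. solution_on f x {0..} \<and> x 0 = y \<longrightarrow> (x \<longlongrightarrow> S) at_top))"

end

(*
  Lyapunov's indirect method. At the steady state S the Jacobian J of the network has
  characteristic polynomial x^4 + e1 x^3 + e2 x^2 + e3 x + e4, and the hypotheses imply
  the Routh-Hurwitz conditions for it. The p_a-coordinate observes the whole linearised system,
  so h |-> (p_a, p_a', p_a'', p_a''') along h' = J h (the Krylov map) conjugates J to the companion
  matrix of this polynomial, and Schwarz's canonical form of the companion system yields an
  explicit positive definite quadratic form B with B(h, J h) <= 0. As the Routh-Hurwitz
  conditions are open and J + eps I is again a Jacobian of the same shape (with all decay rates
  lowered by eps), the form built for J + eps I satisfies B(h, J h) <= -eps B(h, h). Then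
  V(u) = B(u - S, u - S) decays exponentially along solutions near S. For existence, the field
  agrees near S with a globally Lipschitz field, whose solutions exist for all times by Picard
  iteration; by the same Lyapunov estimate they never leave the region where the two agree.
*)
theory Submission
  imports Defs
begin

section \<open>Global solutions of globally Lipschitz autonomous equations\<close>

lemma solution_on_subset: "solution_on f x I \<Longrightarrow> J \<subseteq> I \<Longrightarrow> solution_on f x J"
  unfolding solution_on_def by (meson has_vector_derivative_within_subset subsetD)

lemma at_within_atLeastAtMost_eq_atLeast:
  "0 \<le> t \<Longrightarrow> t < b \<Longrightarrow> at t within {0..b} = at t within {0::real..}"
  by (rule at_within_nhd[of _ "{..<b}"]) auto

lemma integral_atLeast_has_vector_derivative:
  fixes h :: "real \<Rightarrow> 'a::banach"
  assumes "continuous_on {0..} h" "0 \<le> t"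
  shows "((\<lambda>u. integral {0..u} h) has_vector_derivative h t) (at t within {0..})"
proof -
  have "continuous_on {0..t+1} h" using assms(1) by (rule continuous_on_subset) auto
  from integral_has_vector_derivative[OF this] assms(2)
  have "((\<lambda>u. integral {0..u} h) has_vector_derivative h t) (at t within {0..t+1})" by simp
  then show ?thesis using at_within_atLeastAtMost_eq_atLeast[of t "t+1"] assms(2) by simp
qed

lemma monomial_has_integral:
  fixes c t :: real
  assumes "0 \<le> t"
  shows "((\<lambda>s. c * s ^ n) has_integral c * t ^ Suc n / Suc n) {0..t}"
proof -
  have "((\<lambda>s. c * s ^ n) has_integral c * t ^ Suc n / Suc n - c * 0 ^ Suc n / Suc n) {0..t}"
  proof (rule fundamental_theorem_of_calculus[OF assms])
    fix s :: real
    have "((\<lambda>s. s ^ Suc n) has_real_derivative Suc n * s ^ n) (at s within {0..t})"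
      using DERIV_pow[of "Suc n" s] by (simp add: has_field_derivative_at_within)
    then have "((\<lambda>s. c * s ^ Suc n / Suc n) has_real_derivative c * (Suc n * s ^ n) / Suc n)
        (at s within {0..t})"
      by (intro DERIV_cdivide DERIV_cmult)
    then show "((\<lambda>s. c * s ^ Suc n / Suc n) has_vector_derivative c * s ^ n) (at s within {0..t})"
      by (simp add: has_real_derivative_iff_has_vector_derivative)
  qed
  then show ?thesis by simp
qed

primrec picard_iterate :: "('a::banach \<Rightarrow> 'a) \<Rightarrow> 'a \<Rightarrow> nat \<Rightarrow> real \<Rightarrow> 'a" where
  "picard_iterate g y 0 = (\<lambda>t. y)"
| "picard_iterate g y (Suc k) = (\<lambda>t. y + integral {0..t} (\<lambda>s. g (picard_iterate g y k s)))"

context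
  fixes g :: "'a::banach \<Rightarrow> 'a" and L :: real
  assumes lipschitz: "L-lipschitz_on UNIV g"
begin

lemma continuous_on_picard_iterate: "continuous_on {0..} (picard_iterate g y k)"
proof (induction k)
  case (Suc k)
  have "continuous_on {0..} (\<lambda>s. g (picard_iterate g y k s))"
    by (rule continuous_on_compose2[OF lipschitz_on_continuous_on[OF lipschitz] Suc]) simp
  from has_vector_derivative_continuous[OF integral_atLeast_has_vector_derivative[OF this]]
  show ?case
    unfolding picard_iterate.simps continuous_on_eq_continuous_within
    by (auto intro!: continuous_intros)
qed simp

lemma integrable_picard_iterate: "(\<lambda>s. g (picard_iterate g y k s)) integrable_on {0..t}"
proof (rule integrable_continuous_real)
  show "continuous_on {0..t} (\<lambda>s. g (picard_iterate g y k s))"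
    by (rule continuous_on_compose2[OF lipschitz_on_continuous_on[OF lipschitz]
          continuous_on_subset[OF continuous_on_picard_iterate]]) auto
qed

lemma picard_iterate_step:
  assumes "0 \<le> t"
  shows "norm (picard_iterate g y (Suc k) t - picard_iterate g y k t)
           \<le> norm (g y) * L ^ k * t ^ Suc k / fact (Suc k)"
  using assms
proof (induction k arbitrary: t)
  case 0
  then show ?case by simp
next
  case (Suc k)
  let ?P = "picard_iterate g y"
  have L: "0 \<le> L" using lipschitz by (rule lipschitz_on_nonneg)
  have "?P (Suc (Suc k)) t - ?P (Suc k) t
      = integral {0..t} (\<lambda>s. g (?P (Suc k) s)) - integral {0..t} (\<lambda>s. g (?P k s))"
    by simp
  also have "\<dots> = integral {0..t} (\<lambda>s. g (?P (Suc k) s) - g (?P k s))"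
    by (rule integral_diff[OF integrable_picard_iterate integrable_picard_iterate, symmetric])
  also have "norm \<dots> \<le> integral {0..t} (\<lambda>s. L * (norm (g y) * L ^ k / fact (Suc k)) * s ^ Suc k)"
  proof (rule integral_norm_bound_integral)
    show "(\<lambda>s. g (?P (Suc k) s) - g (?P k s)) integrable_on {0..t}"
      by (intro integrable_diff integrable_picard_iterate)
    show "(\<lambda>s. L * (norm (g y) * L ^ k / fact (Suc k)) * s ^ Suc k) integrable_on {0..t}"
      using monomial_has_integral[OF Suc.prems] by blast
    fix s assume "s \<in> {0..t}"
    then have "L * norm (?P (Suc k) s - ?P k s) \<le> L * (norm (g y) * L ^ k * s ^ Suc k / fact (Suc k))"
      using Suc.IH L by (intro mult_left_mono) auto
    then show "norm (g (?P (Suc k) s) - g (?P k s)) \<le> L * (norm (g y) * L ^ k / fact (Suc k)) * s ^ Suc k"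
      using lipschitz_on_normD[OF lipschitz, of "?P (Suc k) s" "?P k s"] by simp
  qed
  also have "\<dots> = L * (norm (g y) * L ^ k / fact (Suc k)) * t ^ Suc (Suc k) / Suc (Suc k)"
    using monomial_has_integral[OF Suc.prems] by (rule integral_unique)
  also have "\<dots> = norm (g y) * L ^ Suc k * t ^ Suc (Suc k) / fact (Suc (Suc k))"
    by (simp add: field_simps)
  finally show ?case .
qed

lemma picard_iterate_uniform_limit:
  obtains x where "\<And>T. uniform_limit {0..T} (picard_iterate g y) x sequentially"
proof -
  define D where "D i t = picard_iterate g y (Suc i) t - picard_iterate g y i t" for i t
  have telescope: "picard_iterate g y k = (\<lambda>t. y + (\<Sum>i<k. D i t))" for k
    unfolding D_def by (subst sum_lessThan_telescope) simp
  have "uniform_limit {0..T} (picard_iterate g y) (\<lambda>t. y + (\<Sum>i. D i t)) sequentially" for T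
  proof -
    define C where "C i = norm (g y) * T * ((L * T) ^ i /\<^sub>R fact i)" for i
    have "summable C"
      unfolding C_def by (intro summable_mult summable_exp_generic)
    have "norm (D i t) \<le> C i" if "t \<in> {0..T}" for i t
    proof -
      have "norm (D i t) \<le> norm (g y) * L ^ i * t ^ Suc i / fact (Suc i)"
        using picard_iterate_step that by (simp add: D_def)
      also have "\<dots> \<le> norm (g y) * L ^ i * T ^ Suc i / fact i"
        using that lipschitz_on_nonneg[OF lipschitz]
        by (intro frac_le mult_left_mono power_mono fact_mono) auto
      also have "\<dots> = C i" by (simp add: C_def power_mult_distrib field_simps)
      finally show ?thesis .
    qed
    from Weierstrass_m_test[OF this \<open>summable C\<close>]
    show ?thesis unfolding telescope by (rule uniform_limit_add[OF uniform_limit_const])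
  qed
  then show thesis by (rule that)
qed

lemma picard_limit_continuous:
  assumes lim: "\<And>T. uniform_limit {0..T} (picard_iterate g y) x sequentially"
  shows "continuous_on {0..} x"
  unfolding continuous_on_eq_continuous_within
proof
  fix t :: real assume t: "t \<in> {0..}"
  have "continuous_on {0..t+1} x"
    by (rule uniform_limit_theorem[OF _ lim])
      (auto intro!: always_eventually continuous_on_subset[OF continuous_on_picard_iterate])
  then have "continuous (at t within {0..t+1}) x"
    using t by (simp add: continuous_on_eq_continuous_within)
  then show "continuous (at t within {0..}) x"
    using at_within_atLeastAtMost_eq_atLeast[of t "t+1"] t by simp
qed

lemma picard_limit_integral_equation:
  assumes lim: "\<And>T. uniform_limit {0..T} (picard_iterate g y) x sequentially" and "0 \<le> t"
  shows "x t = y + integral {0..t} (\<lambda>s. g (x s))"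
proof -
  have "uniform_limit {0..t} (\<lambda>k s. g (picard_iterate g y k s)) (\<lambda>s. g (x s)) sequentially"
    by (rule uniform_limit_compose_uniformly_continuous_on[OF lim
          lipschitz_on_uniformly_continuous[OF lipschitz]]) auto
  then obtain I J where I: "\<And>k. ((\<lambda>s. g (picard_iterate g y k s)) has_integral I k) {0..t}"
    and J: "((\<lambda>s. g (x s)) has_integral J) {0..t}" and "I \<longlonglongrightarrow> J"
    by (rule uniform_limit_integral) (auto intro!: integrable_picard_iterate
        continuous_on_compose2[OF lipschitz_on_continuous_on[OF lipschitz]
          continuous_on_subset[OF continuous_on_picard_iterate]])
  then have "(\<lambda>k. picard_iterate g y (Suc k) t) \<longlonglongrightarrow> y + J"
    using integral_unique[OF I] by (auto intro!: tendsto_intros)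
  moreover have "(\<lambda>k. picard_iterate g y k t) \<longlonglongrightarrow> x t"
    using uniform_limit_on_subset[OF lim[of t], of "{t}"] \<open>0 \<le> t\<close>
    by (auto dest: tendsto_uniform_limitI)
  ultimately have "x t = y + J"
    using LIMSEQ_unique LIMSEQ_Suc by blast
  then show ?thesis
    using J by (simp add: integral_unique)
qed

lemma lipschitz_field_global_solution:
  obtains x where "solution_on g x {0..}" "x 0 = y"
proof -
  obtain x where lim: "\<And>T. uniform_limit {0..T} (picard_iterate g y) x sequentially"
    using picard_iterate_uniform_limit[of y] by blast
  have "solution_on g x {0..}"
    unfolding solution_on_def
  proof
    fix t :: real assume t: "t \<in> {0..}"
    have "continuous_on {0..} (\<lambda>s. g (x s))"
      by (rule continuous_on_compose2[OF lipschitz_on_continuous_on[OF lipschitz]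
            picard_limit_continuous[OF lim]]) simp
    from integral_atLeast_has_vector_derivative[OF this] t
    have "((\<lambda>u. y + integral {0..u} (\<lambda>s. g (x s))) has_vector_derivative g (x t)) (at t within {0..})"
      by (auto intro!: derivative_eq_intros)
    then show "(x has_vector_derivative g (x t)) (at t within {0..})"
      by (rule has_vector_derivative_transform[OF t, rotated])
        (simp add: picard_limit_integral_equation[OF lim])
  qed
  moreover have "x 0 = y"
    using picard_limit_integral_equation[OF lim, of 0] by simp
  ultimately show thesis by (rule that)
qed

end

section \<open>Lyapunov functions\<close>

lemma solution_on_continuous_on: "solution_on f x I \<Longrightarrow> continuous_on I x"
  unfolding solution_on_def
  by (meson continuous_on_eq_continuous_within has_vector_derivative_continuous)

lemma solution_on_has_vector_derivative_at:
  assumes "solution_on f x {0..<T}" "0 < t" "t < T"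
  shows "(x has_vector_derivative f (x t)) (at t)"
proof -
  have "at t within {0..<T} = at t"
    by (rule at_within_open_subset[of _ "{0<..<T}"]) (use assms(2,3) in auto)
  then show ?thesis
    using assms unfolding solution_on_def by (metis atLeastLessThan_iff less_eq_real_def)
qed

context
  fixes S :: "'a::banach" and V :: "'a \<Rightarrow> real" and DV :: "'a \<Rightarrow> 'a \<Rightarrow> real"
    and m M :: real
  assumes m_pos: "0 < m" and M_pos: "0 < M"
    and V_lower: "\<And>u. m * (dist u S)\<^sup>2 \<le> V u"
    and V_upper: "\<And>u. V u \<le> M * (dist u S)\<^sup>2"
    and V_deriv: "\<And>u. (V has_derivative DV u) (at u)"
begin

lemma Lyapunov_decay_while_in_ball:
  assumes decrease: "\<And>u. u \<in> ball S r \<Longrightarrow> DV u (f u) \<le> - c * V u"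
    and sol: "solution_on f x {0..<T}" and t: "0 \<le> t" "t < T"
    and inside: "\<And>s. 0 < s \<Longrightarrow> s < t \<Longrightarrow> x s \<in> ball S r"
  shows "V (x t) \<le> V (x 0) * exp (- c * t)"
proof -
  define E where "E s = V (x s) * exp (c * s)" for s
  have "E t \<le> E 0"
  proof (rule DERIV_nonpos_imp_decreasing_open[OF t(1)])
    have x_cont: "continuous_on {0..t} x"
      using solution_on_continuous_on[OF sol] by (rule continuous_on_subset) (use t in auto)
    have V_cont: "continuous_on UNIV V"
      using V_deriv by (meson continuous_on_eq_continuous_within has_derivative_continuous)
    have "continuous_on {0..t} (\<lambda>s. V (x s))"
      by (rule continuous_on_compose2[OF V_cont x_cont]) simp
    then show "continuous_on {0..t} E"
      unfolding E_def by (intro continuous_intros)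
  next
    fix s assume s: "0 < s" "s < t"
    then have "s < T" using t by linarith
    have "((\<lambda>s. V (x s)) has_real_derivative DV (x s) (f (x s))) (at s)"
      using vector_derivative_diff_chain_within[OF
          solution_on_has_vector_derivative_at[OF sol s(1) \<open>s < T\<close>] has_derivative_subset[OF V_deriv subset_UNIV]]
      by (simp add: o_def has_real_derivative_iff_has_vector_derivative)
    then have "(E has_real_derivative exp (c * s) * (DV (x s) (f (x s)) + c * V (x s))) (at s)"
      unfolding E_def by (auto intro!: derivative_eq_intros simp: algebra_simps)
    moreover have "exp (c * s) * (DV (x s) (f (x s)) + c * V (x s)) \<le> 0"
      using decrease[OF inside[OF s]] by (simp add: mult_nonneg_nonpos)
    ultimately show "\<exists>l. (E has_real_derivative l) (at s) \<and> l \<le> 0" by blast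
  qed
  then show ?thesis
    by (simp add: E_def exp_minus pos_le_divide_eq flip: divide_inverse)
qed

lemma Lyapunov_confinement:
  assumes "0 \<le> c" and decrease: "\<And>u. u \<in> ball S r \<Longrightarrow> DV u (f u) \<le> - c * V u"
    and sol: "solution_on f x {0..<T}" and "0 \<le> \<rho>" "\<rho> \<le> r"
    and start: "M * (dist (x 0) S)\<^sup>2 < m * \<rho>\<^sup>2" and t: "0 \<le> t" "t < T"
  shows "x t \<in> ball S \<rho>"
proof (rule ccontr)
  assume "x t \<notin> ball S \<rho>"
  define K where "K = {0..t} \<inter> (\<lambda>s. dist S (x s)) -` {\<rho>..}"
  have "continuous_on {0..t} (\<lambda>s. dist S (x s))"
    using solution_on_continuous_on[OF sol]
    by (intro continuous_intros) (rule continuous_on_subset, use t in auto)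
  then have "closed K"
    unfolding K_def by (rule continuous_closed_preimage) auto
  moreover have "bounded K"
    unfolding K_def by (rule bounded_subset[of "{0..t}"]) auto
  ultimately have "compact K"
    by (simp add: compact_eq_bounded_closed)
  moreover have "K \<noteq> {}"
    using \<open>x t \<notin> ball S \<rho>\<close> t unfolding K_def by auto
  ultimately obtain t0 where t0: "t0 \<in> K" and first: "\<And>s. s \<in> K \<Longrightarrow> t0 \<le> s"
    using compact_attains_inf by metis
  have "0 \<le> t0" "t0 < T" and exit: "\<rho> \<le> dist S (x t0)"
    using t0 t unfolding K_def by auto
  have "x s \<in> ball S r" if "0 < s" "s < t0" for s
    using first[of s] that t0 \<open>\<rho> \<le> r\<close> by (fastforce simp: K_def)
  then have "V (x t0) \<le> V (x 0) * exp (- c * t0)"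
    using Lyapunov_decay_while_in_ball[OF decrease sol \<open>0 \<le> t0\<close> \<open>t0 < T\<close>] by blast
  also have "\<dots> \<le> V (x 0)"
    using V_lower[of "x 0"] m_pos \<open>0 \<le> c\<close> \<open>0 \<le> t0\<close>
    by (intro mult_left_le) (auto intro: order_trans[rotated])
  also have "\<dots> < m * \<rho>\<^sup>2"
    using V_upper[of "x 0"] start by linarith
  also have "\<dots> \<le> m * (dist (x t0) S)\<^sup>2"
    using exit m_pos \<open>0 \<le> \<rho>\<close> by (auto simp: dist_commute intro!: power_mono)
  also have "\<dots> \<le> V (x t0)"
    by (rule V_lower)
  finally show False by simp
qed

lemma Lyapunov_start_condition:
  assumes "dist y S < \<rho> * sqrt (m / M)"
  shows "M * (dist y S)\<^sup>2 < m * \<rho>\<^sup>2"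
proof -
  have "(dist y S)\<^sup>2 < (\<rho> * sqrt (m / M))\<^sup>2"
    using assms by (intro power_strict_mono) auto
  also have "\<dots> = m * \<rho>\<^sup>2 / M"
    using m_pos M_pos by (simp add: power_mult_distrib)
  finally show ?thesis
    using M_pos by (simp add: pos_less_divide_eq mult.commute)
qed

lemma Lyapunov_stable:
  assumes "0 < c" "0 < r" and decrease: "\<And>u. u \<in> ball S r \<Longrightarrow> DV u (f u) \<le> - c * V u"
    and "0 < \<epsilon>"
  shows "\<exists>\<delta>>0. \<forall>x T. solution_on f x {0..<T} \<and> dist (x 0) S < \<delta> \<longrightarrow>
           (\<forall>t\<in>{0..<T}. dist (x t) S < \<epsilon>)"
proof (intro exI[of _ "min \<epsilon> r * sqrt (m / M)"] conjI allI impI ballI)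
  show "0 < min \<epsilon> r * sqrt (m / M)"
    using assms m_pos M_pos by simp
  fix x T t
  assume x: "solution_on f x {0..<T} \<and> dist (x 0) S < min \<epsilon> r * sqrt (m / M)"
    and t: "t \<in> {0..<T}"
  have "x t \<in> ball S (min \<epsilon> r)"
  proof (rule Lyapunov_confinement[OF _ decrease])
    show "M * (dist (x 0) S)\<^sup>2 < m * (min \<epsilon> r)\<^sup>2"
      using x by (intro Lyapunov_start_condition) simp
  qed (use x t assms in auto)
  then show "dist (x t) S < \<epsilon>" by (simp add: dist_commute)
qed

lemma Lyapunov_solution_exists:
  assumes "0 < c" "0 < r" and decrease: "\<And>u. u \<in> ball S r \<Longrightarrow> DV u (f u) \<le> - c * V u"
    and lipschitz: "L-lipschitz_on UNIV g" and g_eq: "\<And>u. u \<in> ball S r \<Longrightarrow> g u = f u"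
    and start: "dist y S < r * sqrt (m / M)"
  obtains x where "solution_on f x {0..}" "x 0 = y"
proof -
  obtain x where x: "solution_on g x {0..}" "x 0 = y"
    using lipschitz_field_global_solution[OF lipschitz] by blast
  have g_decrease: "DV u (g u) \<le> - c * V u" if "u \<in> ball S r" for u
    using decrease[OF that] g_eq[OF that] by simp
  have "x t \<in> ball S r" if "0 \<le> t" for t
  proof (rule Lyapunov_confinement[OF _ g_decrease])
    show "solution_on g x {0..<t + 1}"
      using x(1) by (rule solution_on_subset) auto
    show "M * (dist (x 0) S)\<^sup>2 < m * r\<^sup>2"
      using start x(2) by (intro Lyapunov_start_condition) simp
  qed (use assms that in auto)
  then have "solution_on f x {0..}"
    using x(1) g_eq unfolding solution_on_def by auto
  then show thesis using x(2) by (rule that)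
qed

lemma Lyapunov_attractive:
  assumes "0 < c" "0 < r" and decrease: "\<And>u. u \<in> ball S r \<Longrightarrow> DV u (f u) \<le> - c * V u"
    and x: "solution_on f x {0..}" and start: "dist (x 0) S < r * sqrt (m / M)"
  shows "(x \<longlongrightarrow> S) at_top"
proof -
  have bound: "dist (x t) S \<le> sqrt (V (x 0) / m * exp (- c * t))" if "0 \<le> t" for t
  proof -
    have sol: "solution_on f x {0..<t + 1}"
      using x by (rule solution_on_subset) auto
    have "V (x t) \<le> V (x 0) * exp (- c * t)"
    proof (rule Lyapunov_decay_while_in_ball[OF decrease sol])
      fix s assume "0 < s" "s < t"
      show "x s \<in> ball S r"
        by (rule Lyapunov_confinement[OF _ decrease sol _ _ Lyapunov_start_condition[OF start]])
          (use assms \<open>0 < s\<close> \<open>s < t\<close> in auto)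
    qed (use that in auto)
    then have "m * (dist (x t) S)\<^sup>2 \<le> V (x 0) * exp (- c * t)"
      using V_lower[of "x t"] by simp
    then show ?thesis
      using m_pos by (intro real_le_rsqrt) (simp add: field_simps)
  qed
  have "filterlim (\<lambda>t. - c * t) at_bot at_top"
    using \<open>0 < c\<close> by (intro filterlim_tendsto_neg_mult_at_bot[OF tendsto_const _ filterlim_ident]) simp
  from filterlim_compose[OF exp_at_bot this]
  have "((\<lambda>t. sqrt (V (x 0) / m * exp (- c * t))) \<longlongrightarrow> sqrt (V (x 0) / m * 0)) at_top"
    by (intro tendsto_intros)
  then have "((\<lambda>t. sqrt (V (x 0) / m * exp (- c * t))) \<longlongrightarrow> 0) at_top"
    by simp
  then have "((\<lambda>t. dist (x t) S) \<longlongrightarrow> 0) at_top"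
    by (rule Lim_null_comparison[rotated])
      (use bound in \<open>auto simp: eventually_at_top_linorder intro!: exI[of _ 0]\<close>)
  then show ?thesis
    by (rule tendsto_dist_iff[THEN iffD2])
qed

lemma Lyapunov_locally_asymptotically_stable:
  assumes "f S = 0" "0 < c" "0 < r"
    and decrease: "\<And>u. u \<in> ball S r \<Longrightarrow> DV u (f u) \<le> - c * V u"
    and lipschitz: "L-lipschitz_on UNIV g" and g_eq: "\<And>u. u \<in> ball S r \<Longrightarrow> g u = f u"
  shows "locally_asymptotically_stable f S"
  unfolding locally_asymptotically_stable_def
proof (intro conjI)
  show "\<forall>\<epsilon>>0. \<exists>\<delta>>0. \<forall>x T. solution_on f x {0..<T} \<and> dist (x 0) S < \<delta> \<longrightarrow>
      (\<forall>t\<in>{0..<T}. dist (x t) S < \<epsilon>)"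
    using Lyapunov_stable[OF assms(2,3) decrease] by blast
  show "\<exists>\<delta>>0. \<forall>y. dist y S < \<delta> \<longrightarrow>
      (\<exists>x. solution_on f x {0..} \<and> x 0 = y) \<and>
      (\<forall>x. solution_on f x {0..} \<and> x 0 = y \<longrightarrow> (x \<longlongrightarrow> S) at_top)"
  proof (intro exI[of _ "r * sqrt (m / M)"] conjI allI impI)
    show "0 < r * sqrt (m / M)"
      using \<open>0 < r\<close> m_pos M_pos by simp
    fix y assume "dist y S < r * sqrt (m / M)"
    from Lyapunov_solution_exists[OF assms(2,3) decrease lipschitz g_eq this]
    show "\<exists>x. solution_on f x {0..} \<and> x 0 = y" by blast
  next
    fix y x assume "dist y S < r * sqrt (m / M)" and x: "solution_on f x {0..} \<and> x 0 = y"
    then show "(x \<longlongrightarrow> S) at_top"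
      by (intro Lyapunov_attractive[OF assms(2,3) decrease]) simp_all
  qed
qed (fact \<open>f S = 0\<close>)

end

section \<open>Stability from a quadratic Lyapunov form of the linearisation\<close>

definition positive_definite_form :: "('a::real_normed_vector \<Rightarrow> 'a \<Rightarrow> real) \<Rightarrow> bool" where
  "positive_definite_form B \<longleftrightarrow>
     bounded_bilinear B \<and> (\<forall>u v. B u v = B v u) \<and> (\<forall>h. h \<noteq> 0 \<longrightarrow> 0 < B h h)"

lemma positive_definite_form_lower_bound:
  fixes B :: "'a::euclidean_space \<Rightarrow> 'a \<Rightarrow> real"
  assumes "positive_definite_form B"
  obtains m where "0 < m" "\<And>h. m * (norm h)\<^sup>2 \<le> B h h"
proof -
  have bilinear: "bounded_bilinear B" using assms by (simp add: positive_definite_form_def)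
  interpret bounded_bilinear B by (fact bilinear)
  have cont: "continuous_on (sphere 0 1) (\<lambda>h. B h h)"
    by (rule bounded_bilinear.continuous_on[OF bilinear continuous_on_id continuous_on_id])
  have "sphere (0::'a) 1 \<noteq> {}"
    by (simp add: sphere_eq_empty)
  then obtain h0 where h0: "h0 \<in> sphere 0 1" and min: "\<And>h. h \<in> sphere 0 1 \<Longrightarrow> B h0 h0 \<le> B h h"
    using continuous_attains_inf[OF compact_sphere _ cont] by blast
  have "h0 \<noteq> 0" using h0 by auto
  then have "0 < B h0 h0"
    using assms by (simp add: positive_definite_form_def)
  moreover have "B h0 h0 * (norm h)\<^sup>2 \<le> B h h" for h
  proof (cases "h = 0")
    case False
    have "B h0 h0 \<le> B (h /\<^sub>R norm h) (h /\<^sub>R norm h)"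
      using min False by simp
    then show ?thesis
      using False by (simp add: scaleR_left scaleR_right field_simps power2_eq_square)
  qed (simp add: zero_left)
  ultimately show thesis by (rule that)
qed

lemma centered_quadratic_form_has_derivative:
  fixes B :: "'a::real_normed_vector \<Rightarrow> 'a \<Rightarrow> real"
  assumes "bounded_bilinear B" "\<And>u v. B u v = B v u"
  shows "((\<lambda>u. B (u - S) (u - S)) has_derivative (\<lambda>v. 2 * B (u - S) v)) (at u)"
proof -
  have "((\<lambda>u. u - S) has_derivative (\<lambda>v. v)) (at u)"
    by (auto intro!: derivative_eq_intros)
  from bounded_bilinear.FDERIV[OF assms(1) this this]
  have "((\<lambda>u. B (u - S) (u - S)) has_derivative (\<lambda>v. B (u - S) v + B v (u - S))) (at u)" .
  moreover have "(\<lambda>v. B (u - S) v + B v (u - S)) = (\<lambda>v. 2 * B (u - S) v)"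
    by (rule ext) (simp add: assms(2)[of _ "u - S"])
  ultimately show ?thesis by simp
qed

lemma positive_definite_form_decreases_near:
  fixes f J :: "'a::euclidean_space \<Rightarrow> 'a" and B :: "'a \<Rightarrow> 'a \<Rightarrow> real"
  assumes "f S = 0" and deriv: "(f has_derivative J) (at S)"
    and B: "positive_definite_form B" and "0 < c" and J_decrease: "\<And>h. B h (J h) \<le> - c * B h h"
  obtains \<rho> where "0 < \<rho>"
    "\<And>u. u \<in> ball S \<rho> \<Longrightarrow> 2 * B (u - S) (f u) \<le> - c * B (u - S) (u - S)"
proof -
  interpret B: bounded_bilinear B using B by (simp add: positive_definite_form_def)
  obtain m where "0 < m" and B_lower: "\<And>h. m * (norm h)\<^sup>2 \<le> B h h"
    using positive_definite_form_lower_bound[OF B] by blast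
  obtain K where "0 < K" and B_upper: "\<And>a b. norm (B a b) \<le> norm a * norm b * K"
    using B.pos_bounded by blast
  define \<eta> where "\<eta> = c * m / (2 * K)"
  have "0 < \<eta>" using \<open>0 < c\<close> \<open>0 < m\<close> \<open>0 < K\<close> by (simp add: \<eta>_def)
  then obtain \<rho> where "0 < \<rho>"
    and remainder: "\<And>y. norm (y - S) < \<rho> \<Longrightarrow> norm (f y - f S - J (y - S)) \<le> \<eta> * norm (y - S)"
    using deriv[unfolded has_derivative_at_alt] by blast
  have "2 * B (u - S) (f u) \<le> - c * B (u - S) (u - S)" if "u \<in> ball S \<rho>" for u
  proof -
    define h where "h = u - S"
    define R where "R = f u - J h"
    have "norm R \<le> \<eta> * norm h"
      using remainder[of u] that \<open>f S = 0\<close> by (simp add: R_def h_def dist_norm norm_minus_commute)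
    have "2 * B h R \<le> 2 * (norm h * norm R * K)"
      using B_upper[of h R] by simp
    also have "\<dots> \<le> 2 * (norm h * (\<eta> * norm h) * K)"
      using \<open>norm R \<le> \<eta> * norm h\<close> \<open>0 < K\<close> by (simp add: mult_left_mono mult_right_mono)
    also have "\<dots> = c * (m * (norm h)\<^sup>2)"
      using \<open>0 < K\<close> by (simp add: \<eta>_def power2_eq_square)
    also have "\<dots> \<le> c * B h h"
      using B_lower \<open>0 < c\<close> by (simp add: mult_left_mono)
    finally have "2 * B h R \<le> c * B h h" .
    moreover have "B h (f u) = B h (J h) + B h R"
      by (simp add: R_def B.diff_right)
    ultimately show ?thesis
      using J_decrease[of h] by (simp add: h_def)
  qed
  with \<open>0 < \<rho>\<close> show thesis by (rule that)
qed

lemma lipschitz_on_closest_point_extension: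
  fixes f :: "'a::euclidean_space \<Rightarrow> 'b::metric_space"
  assumes "L-lipschitz_on (cball S r) f" "0 \<le> r"
  shows "L-lipschitz_on UNIV (\<lambda>u. f (closest_point (cball S r) u))"
proof -
  have "1-lipschitz_on UNIV (closest_point (cball S r))"
    using closest_point_lipschitz[of "cball S r"] assms(2) by (intro lipschitz_onI) auto
  moreover have "closest_point (cball S r) ` UNIV \<subseteq> cball S r"
    using closest_point_in_set[of "cball S r"] assms(2) by auto
  ultimately show ?thesis
    using lipschitz_on_compose2[of 1 UNIV "closest_point (cball S r)" L f]
      lipschitz_on_subset[OF assms(1)] by simp
qed

theorem locally_asymptotically_stable_linearization:
  fixes f J :: "'a::euclidean_space \<Rightarrow> 'a" and B :: "'a \<Rightarrow> 'a \<Rightarrow> real"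
  assumes "f S = 0" and "(f has_derivative J) (at S)"
    and B: "positive_definite_form B" and "0 < c" and "\<And>h. B h (J h) \<le> - c * B h h"
    and "0 < r" and lipschitz: "L-lipschitz_on (cball S r) f"
  shows "locally_asymptotically_stable f S"
proof -
  have bilinear: "bounded_bilinear B" and symmetric: "\<And>u v. B u v = B v u"
    using B by (simp_all add: positive_definite_form_def)
  obtain m where "0 < m" and lower: "\<And>h. m * (norm h)\<^sup>2 \<le> B h h"
    using positive_definite_form_lower_bound[OF B] by blast
  obtain K where "0 < K" and upper: "\<And>a b. norm (B a b) \<le> norm a * norm b * K"
    using bounded_bilinear.pos_bounded[OF bilinear] by blast
  obtain \<rho> where "0 < \<rho>"
    and decrease: "\<And>u. u \<in> ball S \<rho> \<Longrightarrow> 2 * B (u - S) (f u) \<le> - c * B (u - S) (u - S)"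
    using positive_definite_form_decreases_near[OF assms(1-5)] by blast
  define g where "g u = f (closest_point (cball S r) u)" for u
  have g_lipschitz: "L-lipschitz_on UNIV g"
    unfolding g_def using lipschitz \<open>0 < r\<close> by (intro lipschitz_on_closest_point_extension) auto
  have g_eq: "g u = f u" if "u \<in> ball S (min r \<rho>)" for u
    using that by (simp add: g_def closest_point_self)
  have V_lower: "m * (dist u S)\<^sup>2 \<le> B (u - S) (u - S)" for u
    using lower[of "u - S"] by (simp add: dist_norm)
  have V_upper: "B (u - S) (u - S) \<le> K * (dist u S)\<^sup>2" for u
    using upper[of "u - S" "u - S"] by (simp add: dist_norm power2_eq_square mult_ac)
  have "2 * B (u - S) (f u) \<le> - c * B (u - S) (u - S)" if "u \<in> ball S (min r \<rho>)" for u
    using decrease that by simp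
  from Lyapunov_locally_asymptotically_stable[where r = "min r \<rho>", OF \<open>0 < m\<close> \<open>0 < K\<close> V_lower V_upper
      centered_quadratic_form_has_derivative[OF bilinear symmetric] \<open>f S = 0\<close> \<open>0 < c\<close> _ this
      g_lipschitz g_eq]
  show ?thesis
    using \<open>0 < r\<close> \<open>0 < \<rho>\<close> by simp
qed

section \<open>Routh-Hurwitz conditions for quartics\<close>

(* Routh-Hurwitz conditions for the polynomial x^4 + a1 x^3 + a2 x^2 + a3 x + a4. *)
definition hurwitz4 :: "real \<Rightarrow> real \<Rightarrow> real \<Rightarrow> real \<Rightarrow> bool" where
  "hurwitz4 a1 a2 a3 a4 \<longleftrightarrow>
     0 < a1 \<and> 0 < a1 * a2 - a3 \<and> 0 < a4 \<and> 0 < a3 * (a1 * a2 - a3) - a1\<^sup>2 * a4"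

lemma hurwitz4I:
  assumes "0 < a1" "0 < a3" "0 < a4" "0 < a1 * a2 * a3 - a1\<^sup>2 * a4 - a3\<^sup>2"
  shows "hurwitz4 a1 a2 a3 a4"
proof -
  have "a3 * (a1 * a2 - a3) = (a1 * a2 * a3 - a1\<^sup>2 * a4 - a3\<^sup>2) + a1\<^sup>2 * a4"
    by (simp add: algebra_simps power2_eq_square)
  then have "0 < a3 * (a1 * a2 - a3)"
    using assms by (smt (verit) mult_pos_pos zero_less_power)
  then show ?thesis
    using assms by (auto simp: hurwitz4_def zero_less_mult_iff algebra_simps power2_eq_square)
qed

definition companion4 :: "real \<Rightarrow> real \<Rightarrow> real \<Rightarrow> real \<Rightarrow> state4 \<Rightarrow> state4" where
  "companion4 a1 a2 a3 a4 =
     (\<lambda>(z1, z2, z3, z4). (z2, z3, z4, - (a4 * z1 + a3 * z2 + a2 * z3 + a1 * z4)))"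

(*
  In the coordinates w = (z1, z2, z3 + s4 z1, z4 + (s3 + s4) z2) the companion system with
  a1 = s1, a2 = s2 + s3 + s4, a3 = s1 (s3 + s4), a4 = s2 s4 takes Schwarz's canonical form
  w1' = w2, w2' = w3 - s4 w1, w3' = w4 - s3 w2, w4' = - s1 w4 - s2 w3, for which
  s2 s3 s4 w1^2 + s2 s3 w2^2 + s2 w3^2 + w4^2 is a Lyapunov function.
*)
definition schwarz_form :: "real \<Rightarrow> real \<Rightarrow> real \<Rightarrow> state4 \<Rightarrow> state4 \<Rightarrow> real" where
  "schwarz_form s2 s3 s4 = (\<lambda>(z1, z2, z3, z4) (y1, y2, y3, y4).
     s2 * s3 * s4 * z1 * y1 + s2 * s3 * z2 * y2 + s2 * (z3 + s4 * z1) * (y3 + s4 * y1)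
     + (z4 + (s3 + s4) * z2) * (y4 + (s3 + s4) * y2))"

lemma hurwitz4_schwarz_parameters:
  assumes "hurwitz4 a1 a2 a3 a4"
  obtains s2 s3 s4 where "0 < s2" "0 < s3" "0 < s4"
    "a2 = s2 + s3 + s4" "a3 = a1 * (s3 + s4)" "a4 = s2 * s4"
proof -
  have a1: "0 < a1" and D2: "0 < a1 * a2 - a3" and a4: "0 < a4"
    and D3: "0 < a3 * (a1 * a2 - a3) - a1\<^sup>2 * a4"
    using assms by (auto simp: hurwitz4_def)
  define s2 where "s2 = (a1 * a2 - a3) / a1"
  have s2: "0 < s2" using a1 D2 by (simp add: s2_def)
  have "a3 / a1 - a4 / s2 = (a3 * (a1 * a2 - a3) - a1\<^sup>2 * a4) / (a1 * (a1 * a2 - a3))"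
    using a1 D2 by (simp add: s2_def field_simps power2_eq_square)
  then have s3: "0 < a3 / a1 - a4 / s2" using a1 D2 D3 by simp
  have s4: "0 < a4 / s2" using s2 a4 by simp
  have "a2 = s2 + (a3 / a1 - a4 / s2) + a4 / s2"
    using a1 by (simp add: s2_def diff_divide_distrib)
  moreover have "a3 = a1 * (a3 / a1 - a4 / s2 + a4 / s2)" "a4 = s2 * (a4 / s2)"
    using a1 s2 by simp_all
  ultimately show thesis by (rule that[OF s2 s3 s4])
qed

lemma schwarz_form_companion:
  "schwarz_form s2 s3 s4 z (companion4 s1 (s2 + s3 + s4) (s1 * (s3 + s4)) (s2 * s4) z)
     = - s1 * (snd (snd (snd z)) + (s3 + s4) * fst (snd z))\<^sup>2"
  by (cases z) (simp add: schwarz_form_def companion4_def algebra_simps power2_eq_square)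

lemma schwarz_form_commute: "schwarz_form s2 s3 s4 z y = schwarz_form s2 s3 s4 y z"
  by (cases z; cases y) (simp add: schwarz_form_def algebra_simps)

lemma bounded_bilinear_schwarz_form: "bounded_bilinear (schwarz_form s2 s3 s4)"
  unfolding bilinear_conv_bounded_bilinear[symmetric] bilinear_def
  by (auto intro!: linearI simp: schwarz_form_def case_prod_unfold algebra_simps)

lemma schwarz_form_pos:
  assumes "0 < s2" "0 < s3" "0 < s4" "z \<noteq> 0"
  shows "0 < schwarz_form s2 s3 s4 z z"
proof -
  obtain z1 z2 z3 z4 where z: "z = (z1, z2, z3, z4)" by (cases z)
  have "z1 \<noteq> 0 \<or> z2 \<noteq> 0 \<or> z3 + s4 * z1 \<noteq> 0 \<or> z4 + (s3 + s4) * z2 \<noteq> 0"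
    using assms(4) by (auto simp: z zero_prod_def)
  then have "0 < s2 * s3 * s4 * z1\<^sup>2 \<or> 0 < s2 * s3 * z2\<^sup>2
      \<or> 0 < s2 * (z3 + s4 * z1)\<^sup>2 \<or> 0 < (z4 + (s3 + s4) * z2)\<^sup>2"
    using assms(1-3) by (elim disjE) simp_all
  moreover have "0 \<le> s2 * s3 * s4 * z1\<^sup>2" "0 \<le> s2 * s3 * z2\<^sup>2" "0 \<le> s2 * (z3 + s4 * z1)\<^sup>2"
    using assms by simp_all
  moreover have "schwarz_form s2 s3 s4 z z = s2 * s3 * s4 * z1\<^sup>2 + s2 * s3 * z2\<^sup>2
      + s2 * (z3 + s4 * z1)\<^sup>2 + (z4 + (s3 + s4) * z2)\<^sup>2"
    by (simp add: z schwarz_form_def power2_eq_square)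
  ultimately show ?thesis by (smt (verit) zero_le_power2)
qed

definition krylov4 :: "('a \<Rightarrow> 'a) \<Rightarrow> ('a \<Rightarrow> real) \<Rightarrow> 'a \<Rightarrow> state4" where
  "krylov4 J \<phi> h = (\<phi> h, \<phi> (J h), \<phi> (J (J h)), \<phi> (J (J (J h))))"

lemma krylov4_companion:
  assumes "\<And>h. \<phi> (J (J (J (J h))))
             = - (a4 * \<phi> h + a3 * \<phi> (J h) + a2 * \<phi> (J (J h)) + a1 * \<phi> (J (J (J h))))"
  shows "krylov4 J \<phi> (J h) = companion4 a1 a2 a3 a4 (krylov4 J \<phi> h)"
  using assms by (simp add: krylov4_def companion4_def)

lemma linear_krylov4: "linear J \<Longrightarrow> linear \<phi> \<Longrightarrow> linear (krylov4 J \<phi>)"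
  by (rule linearI) (simp_all add: krylov4_def linear_add linear_scale)

lemma hurwitz4_Lyapunov_form:
  fixes J :: "'a::euclidean_space \<Rightarrow> 'a" and \<phi> :: "'a \<Rightarrow> real"
  assumes "linear J" "linear \<phi>"
    and observable: "\<And>h. krylov4 J \<phi> h = 0 \<Longrightarrow> h = 0"
    and cayley_hamilton: "\<And>h. \<phi> (J (J (J (J h))))
             = - (a4 * \<phi> h + a3 * \<phi> (J h) + a2 * \<phi> (J (J h)) + a1 * \<phi> (J (J (J h))))"
    and "hurwitz4 a1 a2 a3 a4"
  obtains B where "positive_definite_form B" "\<And>h. B h (J h) \<le> 0"
proof -
  obtain s2 s3 s4 where s: "0 < s2" "0 < s3" "0 < s4"
    and a: "a2 = s2 + s3 + s4" "a3 = a1 * (s3 + s4)" "a4 = s2 * s4"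
    using hurwitz4_schwarz_parameters[OF assms(5)] by blast
  define K where "K = krylov4 J \<phi>"
  define B where "B h v = schwarz_form s2 s3 s4 (K h) (K v)" for h v
  have "bounded_linear K"
    unfolding K_def using linear_krylov4[OF assms(1,2)] by (simp add: linear_conv_bounded_linear)
  then have "bounded_bilinear B"
    unfolding B_def by (intro bounded_bilinear.comp[OF bounded_bilinear_schwarz_form])
  moreover have "0 < B h h" if "h \<noteq> 0" for h
  proof -
    have "K h \<noteq> 0" using observable that by (auto simp: K_def)
    then show ?thesis unfolding B_def by (rule schwarz_form_pos[OF s])
  qed
  ultimately have "positive_definite_form B"
    by (auto simp: positive_definite_form_def B_def schwarz_form_commute)
  moreover have "B h (J h) \<le> 0" for h
  proof -
    have "B h (J h) = schwarz_form s2 s3 s4 (K h)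
        (companion4 a1 (s2 + s3 + s4) (a1 * (s3 + s4)) (s2 * s4) (K h))"
      unfolding B_def K_def krylov4_companion[where J = J and \<phi> = \<phi>, OF cayley_hamilton] a ..
    also have "\<dots> \<le> 0"
      unfolding schwarz_form_companion using \<open>hurwitz4 a1 a2 a3 a4\<close> by (simp add: hurwitz4_def)
    finally show ?thesis .
  qed
  ultimately show thesis by (rule that)
qed

section \<open>The two-gene network\<close>

definition hill_activation :: "real \<Rightarrow> nat \<Rightarrow> real \<Rightarrow> real" where
  "hill_activation \<theta> n p = p ^ n / (\<theta> ^ n + p ^ n)"

definition hill_repression :: "real \<Rightarrow> nat \<Rightarrow> real \<Rightarrow> real" where
  "hill_repression \<theta> n p = \<theta> ^ n / (\<theta> ^ n + p ^ n)"

lemma hill_activation_eq: "\<theta> \<noteq> 0 \<Longrightarrow> (p / \<theta>) ^ n / (1 + (p / \<theta>) ^ n) = hill_activation \<theta> n p"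
  unfolding hill_activation_def
  by (cases "\<theta> ^ n + p ^ n = 0") (simp_all add: power_divide field_simps)

lemma hill_repression_eq: "\<theta> \<noteq> 0 \<Longrightarrow> 1 / (1 + (p / \<theta>) ^ n) = hill_repression \<theta> n p"
  unfolding hill_repression_def
  by (cases "\<theta> ^ n + p ^ n = 0") (simp_all add: power_divide field_simps)

lemma hill_activation_has_derivative:
  assumes "0 < \<theta>" "0 \<le> p"
  shows "(hill_activation \<theta> n has_real_derivative
           real n * \<theta> ^ n * p ^ (n - 1) / (\<theta> ^ n + p ^ n)\<^sup>2) (at p)"
proof -
  have "0 < \<theta> ^ n + p ^ n" using assms by (simp add: add_pos_nonneg)
  then show ?thesis
    unfolding hill_activation_def
    by (auto intro!: derivative_eq_intros simp: power2_eq_square field_simps)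
qed

lemma hill_repression_has_derivative:
  assumes "0 < \<theta>" "0 \<le> p"
  shows "(hill_repression \<theta> n has_real_derivative
           - (real n * \<theta> ^ n * p ^ (n - 1) / (\<theta> ^ n + p ^ n)\<^sup>2)) (at p)"
proof -
  have "0 < \<theta> ^ n + p ^ n" using assms by (simp add: add_pos_nonneg)
  then show ?thesis
    unfolding hill_repression_def
    by (auto intro!: derivative_eq_intros simp: power2_eq_square field_simps)
qed

definition gene_jacobian ::
  "real \<Rightarrow> real \<Rightarrow> real \<Rightarrow> real \<Rightarrow> real \<Rightarrow> real \<Rightarrow> real \<Rightarrow> real \<Rightarrow> real \<Rightarrow> state4 \<Rightarrow> state4" where
  "gene_jacobian ga gb da db ka kb X Y Z = (\<lambda>(h1, h2, h3, h4).
     (- ga * h1 + X * h3 + Y * h4, - gb * h2 + Z * h3, ka * h1 - da * h3, kb * h2 - db * h4))"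

lemma linear_gene_jacobian: "linear (gene_jacobian ga gb da db ka kb X Y Z)"
  by (rule linearI) (auto simp: gene_jacobian_def algebra_simps)

lemma gene_jacobian_cayley_hamilton:
  fixes ga gb da db ka kb X Y Z :: real and h :: state4
  defines "J \<equiv> gene_jacobian ga gb da db ka kb X Y Z" and "\<phi> \<equiv> \<lambda>h::state4. fst (snd (snd h))"
  shows "\<phi> (J (J (J (J h))))
    = - ((ga * gb * da * db - ka * kb * Y * Z - ka * gb * db * X) * \<phi> h
         + (da * db * (ga + gb) + (da + db) * ga * gb - ka * (db + gb) * X) * \<phi> (J h)
         + (ga * gb + (ga + gb) * (da + db) + da * db - ka * X) * \<phi> (J (J h))
         + (ga + gb + da + db) * \<phi> (J (J (J h))))"
  by (cases h) (simp add: J_def \<phi>_def gene_jacobian_def algebra_simps)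

lemma gene_jacobian_observable:
  assumes "ka \<noteq> 0" "kb \<noteq> 0" "Y \<noteq> 0"
    and "krylov4 (gene_jacobian ga gb da db ka kb X Y Z) (\<lambda>h. fst (snd (snd h))) h = 0"
  shows "h = 0"
proof -
  obtain h1 h2 h3 h4 where h: "h = (h1, h2, h3, h4)" by (cases h)
  have "h3 = 0" using assms(4) by (simp add: h krylov4_def gene_jacobian_def zero_prod_def)
  moreover from this have "h1 = 0"
    using assms(1,4) by (simp add: h krylov4_def gene_jacobian_def zero_prod_def)
  moreover from calculation have "h4 = 0"
    using assms(1,3,4) by (simp add: h krylov4_def gene_jacobian_def zero_prod_def)
  moreover from calculation have "h2 = 0"
    using assms by (simp add: h krylov4_def gene_jacobian_def zero_prod_def)
  ultimately show ?thesis by (simp add: h zero_prod_def)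
qed

definition gene_hurwitz ::
  "real \<Rightarrow> real \<Rightarrow> real \<Rightarrow> real \<Rightarrow> real \<Rightarrow> real \<Rightarrow> real \<Rightarrow> real \<Rightarrow> real \<Rightarrow> bool" where
  "gene_hurwitz ga gb da db ka kb X Y Z \<longleftrightarrow> hurwitz4 (ga + gb + da + db)
     (ga * gb + (ga + gb) * (da + db) + da * db - ka * X)
     (da * db * (ga + gb) + (da + db) * ga * gb - ka * (db + gb) * X)
     (ga * gb * da * db - ka * kb * Y * Z - ka * gb * db * X)"

lemma gene_jacobian_Lyapunov_form:
  assumes "ka \<noteq> 0" "kb \<noteq> 0" "Y \<noteq> 0" "gene_hurwitz ga gb da db ka kb X Y Z"
  obtains B where "positive_definite_form B"
    "\<And>h. B h (gene_jacobian ga gb da db ka kb X Y Z h) \<le> 0"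
proof (rule hurwitz4_Lyapunov_form[where J = "gene_jacobian ga gb da db ka kb X Y Z"
      and \<phi> = "\<lambda>h. fst (snd (snd h))"])
  show "linear (\<lambda>h::state4. fst (snd (snd h)))" by (rule linearI) auto
qed (use that linear_gene_jacobian gene_jacobian_observable[OF assms(1-3)]
       gene_jacobian_cayley_hamilton assms(4)[unfolded gene_hurwitz_def] in auto)

lemma gene_jacobian_strict_Lyapunov_form:
  assumes "ka \<noteq> 0" "kb \<noteq> 0" "Y \<noteq> 0" "gene_hurwitz ga gb da db ka kb X Y Z"
  obtains B c where "positive_definite_form B" "0 < c"
    "\<And>h. B h (gene_jacobian ga gb da db ka kb X Y Z h) \<le> - c * B h h"
proof -
  have "open {\<epsilon>. gene_hurwitz (ga - \<epsilon>) (gb - \<epsilon>) (da - \<epsilon>) (db - \<epsilon>) ka kb X Y Z}"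
    unfolding gene_hurwitz_def hurwitz4_def
    by (intro open_Collect_conj open_Collect_less continuous_intros)
  moreover have "0 \<in> {\<epsilon>. gene_hurwitz (ga - \<epsilon>) (gb - \<epsilon>) (da - \<epsilon>) (db - \<epsilon>) ka kb X Y Z}"
    using assms(4) by simp
  ultimately obtain e where "0 < e"
    and e: "ball 0 e \<subseteq> {\<epsilon>. gene_hurwitz (ga - \<epsilon>) (gb - \<epsilon>) (da - \<epsilon>) (db - \<epsilon>) ka kb X Y Z}"
    by (meson open_contains_ball)
  define \<epsilon> where "\<epsilon> = e / 2"
  have "0 < \<epsilon>" using \<open>0 < e\<close> by (simp add: \<epsilon>_def)
  have shifted: "gene_hurwitz (ga - \<epsilon>) (gb - \<epsilon>) (da - \<epsilon>) (db - \<epsilon>) ka kb X Y Z"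
    using e \<open>0 < e\<close> unfolding subset_iff by (simp add: \<epsilon>_def)
  obtain B where B: "positive_definite_form B"
    and B_shifted: "\<And>h. B h (gene_jacobian (ga - \<epsilon>) (gb - \<epsilon>) (da - \<epsilon>) (db - \<epsilon>) ka kb X Y Z h) \<le> 0"
    using gene_jacobian_Lyapunov_form[OF assms(1-3) shifted] by blast
  then interpret bounded_bilinear B by (simp add: positive_definite_form_def)
  have "B h (gene_jacobian ga gb da db ka kb X Y Z h) \<le> - \<epsilon> * B h h" for h
  proof -
    have "gene_jacobian (ga - \<epsilon>) (gb - \<epsilon>) (da - \<epsilon>) (db - \<epsilon>) ka kb X Y Z h
        = gene_jacobian ga gb da db ka kb X Y Z h + \<epsilon> *\<^sub>R h"
      by (cases h) (simp add: gene_jacobian_def algebra_simps)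
    then show ?thesis using B_shifted[of h] by (simp add: add_right scaleR_right)
  qed
  with B \<open>0 < \<epsilon>\<close> show thesis by (rule that)
qed

lemma gene_field_hill:
  assumes "tha \<noteq> 0" "thb \<noteq> 0" "thaa \<noteq> 0"
  shows "gene_field ma mb ga gb ka kb da db tha thb thaa na nb naa A1 B1 = (\<lambda>u.
    (ma * (hill_activation thaa naa (fst (snd (snd u))) + hill_repression thb nb (snd (snd (snd u))))
       - ga * fst u + A1,
     mb * hill_repression tha na (fst (snd (snd u))) - gb * fst (snd u) + B1,
     ka * fst u - da * fst (snd (snd u)),
     kb * fst (snd u) - db * snd (snd (snd u))))"
  using assms
  by (auto simp: gene_field_def fun_eq_iff hill_activation_eq hill_repression_eq[symmetric]
      split: prod.splits)

lemma gene_field_has_derivative: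
  assumes "0 < tha" "0 < thb" "0 < thaa" "0 \<le> pa" "0 \<le> pb"
    and "X = ma * real naa * thaa ^ naa * pa ^ (naa - 1) / (thaa ^ naa + pa ^ naa)\<^sup>2"
    and "Y = - (ma * real nb * thb ^ nb * pb ^ (nb - 1) / (thb ^ nb + pb ^ nb)\<^sup>2)"
    and "Z = - (mb * real na * pa ^ (na - 1) * tha ^ na / (pa ^ na + tha ^ na)\<^sup>2)"
  shows "(gene_field ma mb ga gb ka kb da db tha thb thaa na nb naa A1 B1
           has_derivative gene_jacobian ga gb da db ka kb X Y Z) (at (ra, rb, pa, pb))"
proof -
  let ?S = "(ra, rb, pa, pb)"
  have pa: "((\<lambda>u::state4. fst (snd (snd u))) has_derivative (\<lambda>h. fst (snd (snd h)))) (at ?S)"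
    and pb: "((\<lambda>u::state4. snd (snd (snd u))) has_derivative (\<lambda>h. snd (snd (snd h)))) (at ?S)"
    by (auto intro!: derivative_eq_intros)
  note chain = DERIV_compose_FDERIV[where g = "\<lambda>u. fst (snd (snd u))", OF _ pa, simplified]
    DERIV_compose_FDERIV[where g = "\<lambda>u. snd (snd (snd u))", OF _ pb, simplified]
  show ?thesis
    unfolding gene_field_hill[OF assms(1-3)[THEN less_imp_neq, symmetric]]
    by (rule has_derivative_eq_rhs,
        (rule chain(1)[OF hill_activation_has_derivative[OF assms(3,4)]]
          chain(2)[OF hill_repression_has_derivative[OF assms(2,5)]]
          chain(1)[OF hill_repression_has_derivative[OF assms(1,4)]]
          derivative_eq_intros refl)+)
      (auto simp: gene_jacobian_def assms(6-8) fun_eq_iff algebra_simps add.commute)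
qed

lemma lipschitz_on_of_continuous_derivative:
  fixes \<phi> D :: "real \<Rightarrow> real"
  assumes deriv: "\<And>p. p \<in> {a..b} \<Longrightarrow> (\<phi> has_real_derivative D p) (at p)"
    and cont: "continuous_on {a..b} D"
  shows "\<exists>K. K-lipschitz_on {a..b} \<phi>"
proof -
  obtain K where "0 < K" and K: "\<And>p. p \<in> {a..b} \<Longrightarrow> norm (D p) \<le> K"
    using compact_imp_bounded[OF compact_continuous_image[OF cont compact_Icc]]
    by (auto simp: bounded_pos)
  have "K-lipschitz_on {a..b} \<phi>"
  proof (rule lipschitz_onI)
    fix p q assume "p \<in> {a..b}" "q \<in> {a..b}"
    then show "dist (\<phi> p) (\<phi> q) \<le> K * dist p q"
      unfolding dist_norm
      by (intro field_differentiable_bound[where f' = D, OF convex_real_interval(5) _ K])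
        (auto intro!: has_field_derivative_at_within deriv)
  qed (use \<open>0 < K\<close> in simp)
  then show ?thesis ..
qed

lemma lipschitz_on_hill:
  assumes "0 < \<theta>" "0 \<le> a"
  shows "\<exists>K. K-lipschitz_on {a..b} (hill_activation \<theta> n)"
    and "\<exists>K. K-lipschitz_on {a..b} (hill_repression \<theta> n)"
proof -
  have nonneg: "0 \<le> p" if "p \<in> {a..b}" for p using that assms(2) by simp
  have "0 < \<theta> ^ n + p ^ n" if "p \<in> {a..b}" for p
    using assms(1) nonneg[OF that] by (intro add_pos_nonneg) auto
  then have "continuous_on {a..b} (\<lambda>p. real n * \<theta> ^ n * p ^ (n - 1) / (\<theta> ^ n + p ^ n)\<^sup>2)"
    by (intro continuous_intros) force
  then show "\<exists>K. K-lipschitz_on {a..b} (hill_activation \<theta> n)"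
    and "\<exists>K. K-lipschitz_on {a..b} (hill_repression \<theta> n)"
    using assms(1) nonneg
    by (auto intro!: lipschitz_on_of_continuous_derivative continuous_on_minus
        hill_activation_has_derivative hill_repression_has_derivative)
qed

lemma lipschitz_on_state4_coordinates:
  "1-lipschitz_on U (\<lambda>u::state4. fst u)" "1-lipschitz_on U (\<lambda>u::state4. fst (snd u))"
  "1-lipschitz_on U (\<lambda>u::state4. fst (snd (snd u)))" "1-lipschitz_on U (\<lambda>u::state4. snd (snd (snd u)))"
  by (intro lipschitz_onI; simp; meson dist_fst_le dist_snd_le order_trans)+

lemma gene_field_lipschitz_near:
  assumes "0 < tha" "0 < thb" "0 < thaa" "0 < pa" "0 < pb"
  shows "\<exists>L. L-lipschitz_on (cball (ra, rb, pa, pb) (min pa pb / 2))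
           (gene_field ma mb ga gb ka kb da db tha thb thaa na nb naa A1 B1)"
proof -
  define S where "S = (ra, rb, pa, pb)"
  define U where "U = cball S (min pa pb / 2)"
  note coordinates = lipschitz_on_state4_coordinates
  have "fst (snd (snd u)) \<in> {pa / 2 .. 2 * pa} \<and> snd (snd (snd u)) \<in> {pb / 2 .. 2 * pb}"
    if "u \<in> U" for u
  proof -
    have "dist (fst (snd (snd u))) pa \<le> min pa pb / 2" "dist (snd (snd (snd u))) pb \<le> min pa pb / 2"
      using lipschitz_onD[OF coordinates(3) UNIV_I UNIV_I, where x = u and y = S]
        lipschitz_onD[OF coordinates(4) UNIV_I UNIV_I, where x = u and y = S] that by (simp_all add: U_def S_def dist_commute)
    then show ?thesis
      using assms(4,5) unfolding dist_real_def abs_diff_le_iff by auto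
  qed
  then have images: "(\<lambda>u. fst (snd (snd u))) ` U \<subseteq> {pa / 2 .. 2 * pa}"
      "(\<lambda>u. snd (snd (snd u))) ` U \<subseteq> {pb / 2 .. 2 * pb}"
    by auto
  obtain K1 K2 K3 where K1: "K1-lipschitz_on {pa / 2 .. 2 * pa} (hill_activation thaa naa)"
    and K2: "K2-lipschitz_on {pb / 2 .. 2 * pb} (hill_repression thb nb)"
    and K3: "K3-lipschitz_on {pa / 2 .. 2 * pa} (hill_repression tha na)"
    using lipschitz_on_hill assms(1-5) by (meson half_gt_zero less_imp_le)
  have h1: "(K1 * 1)-lipschitz_on U (\<lambda>u. hill_activation thaa naa (fst (snd (snd u))))"
    by (rule lipschitz_on_compose2[OF coordinates(3) lipschitz_on_subset[OF K1 images(1)]])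
  have h2: "(K2 * 1)-lipschitz_on U (\<lambda>u. hill_repression thb nb (snd (snd (snd u))))"
    by (rule lipschitz_on_compose2[OF coordinates(4) lipschitz_on_subset[OF K2 images(2)]])
  have h3: "(K3 * 1)-lipschitz_on U (\<lambda>u. hill_repression tha na (fst (snd (snd u))))"
    by (rule lipschitz_on_compose2[OF coordinates(3) lipschitz_on_subset[OF K3 images(1)]])
  show ?thesis
    unfolding gene_field_hill[OF assms(1-3)[THEN less_imp_neq, symmetric]] S_def[symmetric]
      U_def[symmetric]
    by (rule exI, (rule lipschitz_on_Pair lipschitz_on_add lipschitz_on_diff lipschitz_on_cmult_real
        lipschitz_on_constant coordinates h1 h2 h3)+)
qed

theorem theorem3:
  fixes ma mb ga gb ka kb da db tha thb thaa A1 B1 :: real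
    and na nb naa :: nat
    and ra rb pa pb :: real
  assumes pos: "ma > 0" "mb > 0" "ga > 0" "gb > 0" "ka > 0" "kb > 0"
      "da > 0" "db > 0" "tha > 0" "thb > 0" "thaa > 0"
    and nonneg: "A1 \<ge> 0" "B1 \<ge> 0"
    and npos: "na \<ge> 1" "nb \<ge> 1" "naa \<ge> 1"
    and steady: "gene_field ma mb ga gb ka kb da db tha thb thaa na nb naa A1 B1 (ra, rb, pa, pb) = 0"
    and ppos: "pa > 0" "pb > 0"
    and X_def: "X = ma * real naa * thaa ^ naa * pa ^ (naa - 1) / (thaa ^ naa + pa ^ naa)\<^sup>2"
    and Y_def: "Y = - (ma * real nb * thb ^ nb * pb ^ (nb - 1) / (thb ^ nb + pb ^ nb)\<^sup>2)"
    and Z_def: "Z = - (mb * real na * pa ^ (na - 1) * tha ^ na / (pa ^ na + tha ^ na)\<^sup>2)"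
    and e1_def: "e1 = ga + gb + da + db"
    and e2_def: "e2 = ga * gb + (ga + gb) * (da + db) + da * db - ka * X"
    and e3_def: "e3 = da * db * (ga + gb) + (da + db) * ga * gb - ka * (db + gb) * X"
    and e4_def: "e4 = ga * gb * da * db - ka * kb * Y * Z - ka * gb * db * X"
    and h1: "e1 > 0" and h3: "e3 > 0" and h4: "e4 > 0"
    and hR: "e1 * e2 * e3 - e1\<^sup>2 * e4 - e3\<^sup>2 > 0"
  shows "locally_asymptotically_stable
           (gene_field ma mb ga gb ka kb da db tha thb thaa na nb naa A1 B1) (ra, rb, pa, pb)"
proof -
  have "0 < thb ^ nb + pb ^ nb"
    using pos ppos by (simp add: add_pos_pos)
  then have "0 < ma * real nb * thb ^ nb * pb ^ (nb - 1) / (thb ^ nb + pb ^ nb)\<^sup>2"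
    using pos ppos npos by (intro divide_pos_pos mult_pos_pos) auto
  then have "Y \<noteq> 0" unfolding Y_def by linarith
  moreover have "gene_hurwitz ga gb da db ka kb X Y Z"
    using hurwitz4I[OF h1 h3 h4 hR] unfolding gene_hurwitz_def e1_def e2_def e3_def e4_def .
  moreover have "ka \<noteq> 0" "kb \<noteq> 0" using pos by simp_all
  ultimately obtain B c where B: "positive_definite_form B" and "0 < c"
    and decrease: "\<And>h. B h (gene_jacobian ga gb da db ka kb X Y Z h) \<le> - c * B h h"
    by (metis gene_jacobian_strict_Lyapunov_form)
  obtain L where lipschitz: "L-lipschitz_on (cball (ra, rb, pa, pb) (min pa pb / 2))
      (gene_field ma mb ga gb ka kb da db tha thb thaa na nb naa A1 B1)"
    using gene_field_lipschitz_near[OF pos(9-11) ppos] by blast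
  have "(gene_field ma mb ga gb ka kb da db tha thb thaa na nb naa A1 B1
      has_derivative gene_jacobian ga gb da db ka kb X Y Z) (at (ra, rb, pa, pb))"
    using pos ppos by (intro gene_field_has_derivative X_def Y_def Z_def) auto
  from locally_asymptotically_stable_linearization[OF steady this B \<open>0 < c\<close> decrease _ lipschitz]
  show ?thesis
    using ppos by simp
qed

end
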